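(* Let $X$ satisfy assumptions (A) described in the context, and let $\nu$, $a_1$ be as there. Then for every $r>0$, $$\left|\frac{\nu'(r)}{\nu(r)}\right|\le\frac{3(a_1-1)}{r\wedge1}.$$ Moreover, for $0<r_1<r_2<\infty$, $$\frac{\nu(r_1)}{\nu(r_2)}\le\left(\frac{r_2}{r_1}\right)^{3(a_1-1)}e^{3(a_1-1)(r_2-r_1)}$$ and $$\nu(r_1)-\nu(r_2)\le\frac32(a_1-1)\,\frac{\nu(r_1)}{1\wedge r_1}\,(r_2-r_1)\left(1+\frac{r_2}{r_1}\right).$$
   Context: Assumptions (A): (H0) $X$ is a pure-jump isotropic Lévy process in $\mathbb{R}^d$ with characteristic exponent $\psi$, whose Lévy measure is infinite with density $\nu(x)=\nu(|x|)$. (H1) $\nu(r)$ is nonincreasing and absolutely continuous on $(0,\infty)$, $-\nu'(r)/r$ is nonincreasing on $(0,\infty)$ (where $\nu'$ is the version, defined at every $r>0$, of the function with $\nu(r)=-\int_r^\infty\nu'(\rho)d\rho$), and there is $a_1$ with $\nu(r)\le a_1\nu(r+1)$ for $r\ge1$ and $\nu(r)\le a_1\nu(2r)$ for $0<r\le1$. (H2) There is $a_2$ such that for every $x_0$, $r\in(0,1]$ and every $h\ge0$ on $\mathbb{R}^d$ harmonic in $B(x_0,r)$, $\sup_{B(x_0,r/2)}h\le a_2\inf_{B(x_0,r/2)}h$ (a Borel $f$ is harmonic in open $D$ if $f(x)=E^xf(X_{\tau_B})$, absolutely convergent, for $x\in B$, for all bounded open $B$ with $\overline B\subset D$, $\tau_B=\inf\{t>0:X_t\notin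 B\}$). *)

theory Defs
  imports "HOL-Analysis.Analysis"
begin

end

theory Submission
  imports Defs
begin

text \<open>
  Since \<open>- \<nu>' \<rho> / \<rho>\<close> is nonincreasing, the increment \<open>\<nu> s - \<nu> t\<close>, the integral of
  \<open>- \<nu>'\<close> over \<open>(s, t]\<close>, lies between \<open>(- \<nu>' t / t) (t\<^sup>2 - s\<^sup>2) / 2\<close> and
  \<open>(- \<nu>' s / s) (t\<^sup>2 - s\<^sup>2) / 2\<close>. The lower bound for \<open>(s, t) = (r / 2, r)\<close> or
  \<open>(r - 1, r)\<close> together with the doubling conditions gives
  \<open>- \<nu>' r \<le> 3 (a\<^sub>1 - 1) \<nu> r / min r 1\<close>: this is the first claim, and combined with the
  upper bound it is the third. The second claim amounts to \<open>\<nu> t * t powr c * exp (c * t)\<close>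
  with \<open>c = 3 (a\<^sub>1 - 1)\<close> being nondecreasing. As \<open>\<nu>\<close> need not be differentiable, this is
  checked step by step along fine partitions; over a short step the second-order error is
  absorbed by the slack in \<open>1 / min x 1 < 1 / x + 1\<close>. Dividing by \<open>\<nu>\<close> is legitimate
  because, by the doubling conditions, a zero of \<open>\<nu>\<close> would spread to all of \<open>(0, \<infinity>)\<close>,
  so the Levy measure would vanish instead of being infinite.
\<close>

lemma mono_of_uniform_local_mono:
  fixes f :: "real \<Rightarrow> 'b::preorder"
  assumes "a \<le> b" "\<delta> > 0"
    and local: "\<And>x y. a \<le> x \<Longrightarrow> x < y \<Longrightarrow> y \<le> b \<Longrightarrow> y - x \<le> \<delta> \<Longrightarrow> f x \<le> f y"
  shows "f a \<le> f b"
proof (cases "a = b")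
  case False
  then have ab: "a < b" using assms(1) by simp
  obtain N :: nat where N: "(b - a) / \<delta> < N" using reals_Archimedean2 by blast
  have N0: "real N > 0" using N ab \<open>\<delta> > 0\<close> by (smt (verit) divide_pos_pos)
  define h where "h = (b - a) / N"
  have h0: "h > 0" and h\<delta>: "h \<le> \<delta>" and hN: "a + N * h = b"
    using N N0 ab \<open>\<delta> > 0\<close> by (auto simp: h_def field_simps)
  have "f a \<le> f (a + n * h)" if "n \<le> N" for n
    using that
  proof (induction n)
    case (Suc n)
    have "a + Suc n * h \<le> b"
      using Suc.prems h0 hN by (smt (verit) mult_right_mono of_nat_le_iff)
    then have "f (a + n * h) \<le> f (a + Suc n * h)"
      using h0 h\<delta> by (intro local) (auto simp: algebra_simps)
    then show ?case using Suc order_trans by fastforce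
  qed simp
  then show ?thesis using hN by fastforce
qed simp

lemma powr_exp_growth:
  fixes c x y :: real
  assumes "c \<ge> 0" "0 < x" "x \<le> y"
  shows "x powr c * exp (c * x) * (1 + c * (y - x) * (1 / y + 1)) \<le> y powr c * exp (c * y)"
proof -
  have "(y - x) / y \<le> ln (y / x)"
    using ln_le_minus_one[of "x / y"] assms by (simp add: ln_div field_simps)
  then have "c * ((y - x) / y) \<le> c * ln (y / x)" using assms by (intro mult_left_mono) auto
  then have "1 + c * (y - x) * (1 / y + 1) \<le> 1 + (c * ln (y / x) + c * (y - x))"
    by (simp add: distrib_left)
  also have "\<dots> \<le> exp (c * ln (y / x) + c * (y - x))" by (rule exp_ge_add_one_self)
  finally have "x powr c * exp (c * x) * (1 + c * (y - x) * (1 / y + 1))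
      \<le> x powr c * exp (c * x) * exp (c * ln (y / x) + c * (y - x))"
    using assms by (intro mult_left_mono) auto
  also have "\<dots> = y powr c * exp (c * y)"
    using assms by (simp add: powr_def ln_div exp_add[symmetric] algebra_simps)
  finally show ?thesis .
qed

lemma short_step_ineq:
  fixes c x y :: real
  assumes "c \<ge> 0" "0 < x" "x < y" and small: "(y - x) * (3 + c) * (1 + y)^2 \<le> (min x 1)^3"
  shows "y^2 + c * (y - x) * y * (1 + y) \<le> x * min x 1 * (1 + y)"
proof -
  have D: "y - x > 0" using assms by simp
  have "c * (y * (1 + y)) \<le> c * (1 + y)^2"
    using assms by (intro mult_left_mono) (auto simp: power2_eq_square)
  moreover have "y \<le> (1 + y)^2" using assms by (simp add: power2_eq_square algebra_simps)
  ultimately have bound: "2 * x + (y - x) + c * y * (1 + y) \<le> (3 + c) * (1 + y)^2"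
    and bound': "y * (1 + c * (1 + y)) \<le> (3 + c) * (1 + y)^2"
    using assms by (auto simp: algebra_simps)
  show ?thesis
  proof (cases "x \<le> 1")
    case True
    have "(y - x) * (2 * x + (y - x) + c * y * (1 + y)) \<le> (y - x) * ((3 + c) * (1 + y)^2)"
      using bound D by (intro mult_left_mono) auto
    also have "\<dots> \<le> x^3" using small True by (simp add: mult.assoc)
    also have "\<dots> \<le> x^2 * y" using assms by (simp add: power3_eq_cube power2_eq_square)
    finally show ?thesis using True by (simp add: power2_eq_square algebra_simps)
  next
    case False
    have "(y - x) * (y * (1 + c * (1 + y))) \<le> (y - x) * ((3 + c) * (1 + y)^2)"
      using bound' D by (intro mult_left_mono) auto
    also have "\<dots> \<le> 1" using small False by (simp add: mult.assoc)
    finally show ?thesis using False by (simp add: power2_eq_square algebra_simps)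
  qed
qed

lemma weighted_short_step:
  fixes c x y v w :: real
  assumes c: "c \<ge> 0" and xy: "0 < x" "x < y"
    and small: "(y - x) * (3 + c) * (1 + y)^2 \<le> (min x 1)^3"
    and v: "v > 0" and drop: "v - w \<le> c * v * (y - x) * y / (x * min x 1)"
  shows "v * (x powr c * exp (c * x)) \<le> w * (y powr c * exp (c * y))"
proof -
  define m where "m = min x 1"
  define A where "A = c * (y - x) * y / (x * m)"
  define B where "B = c * (y - x) * (1 / y + 1)"
  have m: "m > 0" using xy by (simp add: m_def)
  have B: "B \<ge> 0" using c xy by (simp add: B_def)
  have "y * (1 + B) * y = y^2 + c * (y - x) * y * (1 + y)"
    using xy by (simp add: B_def field_simps power2_eq_square)
  then have "y * (1 + B) * y \<le> x * m * (1 + y)"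
    using short_step_ineq[OF c xy small] by (simp add: m_def)
  then have "y * (1 + B) / (x * m) \<le> 1 / y + 1"
    using xy m by (simp add: field_simps)
  then have "c * (y - x) * (y * (1 + B) / (x * m)) \<le> c * (y - x) * (1 / y + 1)"
    using c xy by (intro mult_left_mono) auto
  then have "A * (1 + B) \<le> B" by (simp add: A_def B_def)
  then have AB: "1 \<le> (1 - A) * (1 + B)" by (simp add: algebra_simps)
  then have A: "0 < 1 - A" using B by (smt (verit) mult_nonpos_nonneg)
  have "v - w \<le> v * A" using drop by (simp add: A_def m_def mult.assoc mult.left_commute)
  then have w: "v * (1 - A) \<le> w" by (simp add: right_diff_distrib)
  have w0: "0 \<le> v * (1 - A)" using v A by simp
  have "v * (x powr c * exp (c * x)) \<le> v * (x powr c * exp (c * x)) * ((1 - A) * (1 + B))"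
    using mult_left_mono[OF AB, of "v * (x powr c * exp (c * x))"] v xy by simp
  also have "\<dots> = (v * (1 - A)) * (x powr c * exp (c * x) * (1 + B))" by (simp add: ac_simps)
  also have "\<dots> \<le> w * (y powr c * exp (c * y))"
  proof (rule mult_mono)
    show "x powr c * exp (c * x) * (1 + B) \<le> y powr c * exp (c * y)"
      using powr_exp_growth[OF c xy(1)] xy by (simp add: B_def)
    show "0 \<le> w" using w w0 by linarith
    show "0 \<le> x powr c * exp (c * x) * (1 + B)" using B by simp
  qed (rule w)
  finally show ?thesis .
qed

lemma set_integral_le_linear:
  fixes f :: "real \<Rightarrow> real"
  assumes "set_integrable lborel {s<..t} f" "s \<le> t" "\<And>x. x \<in> {s<..t} \<Longrightarrow> f x \<le> C * x"
  shows "(LINT x:{s<..t}|lborel. f x) \<le> C * (t^2 - s^2) / 2"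
proof -
  have lin: "set_integrable lborel {s<..t} (\<lambda>x. C * x)"
  proof (rule set_integrable_subset[of _ "{s..t}"])
    show "set_integrable lborel {s..t} (\<lambda>x. C * x)"
      unfolding set_integrable_def
      using borel_integrable_compact[of "{s..t}" "\<lambda>x. C * x"] by (auto intro!: continuous_intros)
  qed auto
  have "(LINT x:{s<..t}|lborel. f x) \<le> (LINT x:{s<..t}|lborel. C * x)"
    using assms lin by (intro set_integral_mono) auto
  also have "\<dots> = (LBINT x=s..t. C * x)" using assms by (simp add: interval_integral_Ioc)
  also have "\<dots> = C * t^2 / 2 - C * s^2 / 2"
    using assms by (subst interval_integral_FTC_finite[where F = "\<lambda>x. C * x^2 / 2"])
      (auto intro!: continuous_intros derivative_eq_intros
        simp: has_real_derivative_iff_has_vector_derivative[symmetric])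
  finally show ?thesis by (simp add: field_simps)
qed

lemma set_integral_ge_linear:
  fixes f :: "real \<Rightarrow> real"
  assumes "set_integrable lborel {s<..t} f" "s \<le> t" "\<And>x. x \<in> {s<..t} \<Longrightarrow> C * x \<le> f x"
  shows "C * (t^2 - s^2) / 2 \<le> (LINT x:{s<..t}|lborel. f x)"
proof -
  have "(LINT x:{s<..t}|lborel. - f x) \<le> (- C) * (t^2 - s^2) / 2"
    using assms set_integrable_mult_right[of "-1" lborel "{s<..t}" f]
    by (intro set_integral_le_linear) auto
  then show ?thesis using set_integral_uminus[OF assms(1)] by simp
qed

lemma doubling_profile_vanishes:
  fixes f :: "real \<Rightarrow> real" and a :: real
  assumes nonneg: "\<And>r. r > 0 \<Longrightarrow> f r \<ge> 0"
    and noninc: "\<And>s t. 0 < s \<Longrightarrow> s \<le> t \<Longrightarrow> f t \<le> f s"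
    and far: "\<And>r. r \<ge> 1 \<Longrightarrow> f r \<le> a * f (r + 1)"
    and near: "\<And>r. 0 < r \<Longrightarrow> r \<le> 1 \<Longrightarrow> f r \<le> a * f (2 * r)"
    and zero: "r > 0" "f r = 0" and t: "t > 0"
  shows "f t = 0"
proof -
  have beyond: "f t = 0" if "t \<ge> 1" "t + real n \<ge> r" for t n
    using that
  proof (induction n arbitrary: t)
    case 0
    then show ?case using noninc[of r t] nonneg[of t] zero by simp
  next
    case (Suc n)
    then have "f (t + 1) = 0" by simp
    then show ?case using far[of t] nonneg[of t] Suc.prems by simp
  qed
  have large: "f t = 0" if "t \<ge> 1" for t
  proof -
    obtain n :: nat where "r \<le> real n" using real_arch_simple by blast
    then show ?thesis using beyond[of t n] that by simp
  qed
  have small: "f t = 0" if "t > 0" "t * 2^n \<ge> 1" for t n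
    using that
  proof (induction n arbitrary: t)
    case (Suc n)
    show ?case
    proof (cases "t \<ge> 1")
      case False
      have "f (2 * t) = 0" using Suc by (simp add: algebra_simps)
      then show ?thesis using near[of t] nonneg[of t] Suc.prems False by simp
    qed (use large in simp)
  qed (use large in simp)
  obtain n :: nat where "1 / t < 2^n" using real_arch_pow[of 2 "1 / t"] by auto
  then show ?thesis using small[of t n] t by (simp add: field_simps)
qed

locale radial_levy_profile =
  fixes \<nu> \<nu>' :: "real \<Rightarrow> real" and a\<^sub>1 :: real
  assumes pos: "\<And>r. r > 0 \<Longrightarrow> \<nu> r > 0"
    and noninc: "\<And>s t. 0 < s \<Longrightarrow> s \<le> t \<Longrightarrow> \<nu> t \<le> \<nu> s"
    and deriv_int: "\<And>r. r > 0 \<Longrightarrow> set_integrable lborel {r<..} \<nu>'"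
    and deriv_rep: "\<And>r. r > 0 \<Longrightarrow> \<nu> r = - (LINT \<rho>:{r<..}|lborel. \<nu>' \<rho>)"
    and deriv_mono: "\<And>s t. 0 < s \<Longrightarrow> s \<le> t \<Longrightarrow> - \<nu>' t / t \<le> - \<nu>' s / s"
    and a1_far: "\<And>r. r \<ge> 1 \<Longrightarrow> \<nu> r \<le> a\<^sub>1 * \<nu> (r + 1)"
    and a1_near: "\<And>r. 0 < r \<Longrightarrow> r \<le> 1 \<Longrightarrow> \<nu> r \<le> a\<^sub>1 * \<nu> (2 * r)"
begin

lemma set_integrable_neg_deriv: "0 < s \<Longrightarrow> set_integrable lborel {s<..t} (\<lambda>x. - \<nu>' x)"
  using set_integrable_subset[OF deriv_int, of s "{s<..t}"] set_integrable_mult_right[of "-1"]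
  by fastforce

lemma diff_eq_set_integral:
  assumes "0 < s" "s \<le> t"
  shows "\<nu> s - \<nu> t = (LINT x:{s<..t}|lborel. - \<nu>' x)"
proof -
  have "set_integrable lborel {s<..} \<nu>'" using deriv_int assms by simp
  then have i: "set_integrable lborel {s<..t} \<nu>'" by (rule set_integrable_subset) auto
  have un: "{s<..} = {s<..t} \<union> {t<..}" using assms by auto
  have "(LINT x:{s<..}|lborel. \<nu>' x) = (LINT x:{s<..t}|lborel. \<nu>' x) + (LINT x:{t<..}|lborel. \<nu>' x)"
    unfolding un by (rule set_integral_Un) (use i deriv_int[of t] assms in auto)
  then show ?thesis using deriv_rep[of s] deriv_rep[of t] set_integral_uminus[OF i] assms by simp
qed

lemma diff_le:
  assumes "0 < s" "s \<le> t"
  shows "\<nu> s - \<nu> t \<le> (- \<nu>' s / s) * (t^2 - s^2) / 2"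
  unfolding diff_eq_set_integral[OF assms]
proof (rule set_integral_le_linear)
  fix x assume x: "x \<in> {s<..t}"
  then have "- \<nu>' x / x \<le> - \<nu>' s / s" using deriv_mono[of s x] assms by simp
  then show "- \<nu>' x \<le> (- \<nu>' s / s) * x" using x assms by (simp add: field_simps)
qed (use assms set_integrable_neg_deriv in auto)

lemma diff_ge:
  assumes "0 < s" "s \<le> t"
  shows "(- \<nu>' t / t) * (t^2 - s^2) / 2 \<le> \<nu> s - \<nu> t"
  unfolding diff_eq_set_integral[OF assms]
proof (rule set_integral_ge_linear)
  fix x assume x: "x \<in> {s<..t}"
  then have "- \<nu>' t / t \<le> - \<nu>' x / x" using deriv_mono[of x t] assms by simp
  then show "(- \<nu>' t / t) * x \<le> - \<nu>' x" using x assms by (simp add: field_simps)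
qed (use assms set_integrable_neg_deriv in auto)

lemma deriv_nonpos:
  assumes "t > 0"
  shows "\<nu>' t \<le> 0"
proof -
  have "0 \<le> (- \<nu>' t / t) * (((t + 1)^2 - t^2) / 2)"
    using diff_le[of t "t + 1"] noninc[of t "t + 1"] assms by simp
  moreover have "((t + 1)^2 - t^2) / 2 > 0" using assms by (simp add: power2_eq_square algebra_simps)
  ultimately have "0 \<le> - \<nu>' t / t" by (metis linorder_not_le mult_neg_pos)
  then show ?thesis using assms by (simp add: divide_le_0_iff)
qed

lemma a1_ge_1: "a\<^sub>1 \<ge> 1"
  using a1_far[of 1] noninc[of 1 2] pos[of 2] by (smt (verit) mult_less_cancel_right2)

lemma neg_deriv_le:
  assumes r: "r > 0"
  shows "- \<nu>' r \<le> 3 * (a\<^sub>1 - 1) * \<nu> r / min r 1"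
proof -
  define P where "P = - \<nu>' r"
  have P: "P \<ge> 0" using deriv_nonpos[OF r] by (simp add: P_def)
  have Z: "(a\<^sub>1 - 1) * \<nu> r \<ge> 0" using a1_ge_1 pos[OF r] by simp
  show ?thesis
  proof (cases "r \<le> 2")
    case True
    have "P * r * 3 / 8 = (P / r) * (r^2 - (r/2)^2) / 2" using r by (simp add: field_simps power2_eq_square)
    also have "\<dots> \<le> \<nu> (r/2) - \<nu> r" using diff_ge[of "r/2" r] r by (simp add: P_def)
    also have "\<dots> \<le> (a\<^sub>1 - 1) * \<nu> r" using a1_near[of "r/2"] r True by (simp add: algebra_simps)
    finally have "P * r \<le> 8/3 * ((a\<^sub>1 - 1) * \<nu> r)" by simp
    moreover have "P * min r 1 \<le> P * r" using P by (intro mult_left_mono) auto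
    ultimately have "P * min r 1 \<le> 3 * (a\<^sub>1 - 1) * \<nu> r" using Z by linarith
    then show ?thesis using r by (simp add: P_def le_divide_eq)
  next
    case False
    have "P * (3/4) \<le> P * ((2*r - 1) / (2*r))" using False P by (intro mult_left_mono) (auto simp: field_simps)
    also have "\<dots> = (P / r) * (r^2 - (r-1)^2) / 2" using r by (simp add: field_simps power2_eq_square)
    also have "\<dots> \<le> \<nu> (r-1) - \<nu> r" using diff_ge[of "r-1" r] False by (simp add: P_def)
    also have "\<dots> \<le> (a\<^sub>1 - 1) * \<nu> r" using a1_far[of "r-1"] False by (simp add: algebra_simps)
    finally have "P \<le> 3 * ((a\<^sub>1 - 1) * \<nu> r)" using Z by linarith
    then show ?thesis using False by (simp add: P_def algebra_simps)
  qed
qed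

lemma abs_log_deriv_le:
  assumes "r > 0"
  shows "\<bar>\<nu>' r / \<nu> r\<bar> \<le> 3 * (a\<^sub>1 - 1) / min r 1"
  using neg_deriv_le[OF assms] deriv_nonpos[OF assms] pos[OF assms] assms
  by (simp add: abs_div divide_le_eq field_simps)

lemma diff_le_bound:
  assumes "0 < r\<^sub>1" "r\<^sub>1 < r\<^sub>2"
  shows "\<nu> r\<^sub>1 - \<nu> r\<^sub>2 \<le> 3 / 2 * (a\<^sub>1 - 1) * (\<nu> r\<^sub>1 / min 1 r\<^sub>1) * (r\<^sub>2 - r\<^sub>1) * (1 + r\<^sub>2 / r\<^sub>1)"
proof -
  define D where "D = (r\<^sub>2 - r\<^sub>1) * (1 + r\<^sub>2 / r\<^sub>1) / 2"
  have D: "D \<ge> 0" using assms by (simp add: D_def)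
  have "\<nu> r\<^sub>1 - \<nu> r\<^sub>2 \<le> (- \<nu>' r\<^sub>1 / r\<^sub>1) * (r\<^sub>2^2 - r\<^sub>1^2) / 2" using diff_le assms by simp
  also have "\<dots> = - \<nu>' r\<^sub>1 * D" using assms by (simp add: D_def field_simps power2_eq_square)
  also have "\<dots> \<le> (3 * (a\<^sub>1 - 1) * \<nu> r\<^sub>1 / min r\<^sub>1 1) * D"
    using neg_deriv_le assms D by (intro mult_right_mono) auto
  finally show ?thesis by (simp add: D_def min.commute mult.commute mult.left_commute mult.assoc)
qed

lemma weighted_profile_mono:
  assumes "0 < r\<^sub>1" "r\<^sub>1 \<le> r\<^sub>2"
  defines "c \<equiv> 3 * (a\<^sub>1 - 1)"
  shows "\<nu> r\<^sub>1 * (r\<^sub>1 powr c * exp (c * r\<^sub>1)) \<le> \<nu> r\<^sub>2 * (r\<^sub>2 powr c * exp (c * r\<^sub>2))"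
proof (rule mono_of_uniform_local_mono[where f = "\<lambda>t. \<nu> t * (t powr c * exp (c * t))"])
  have c: "c \<ge> 0" using a1_ge_1 by (simp add: c_def)
  define \<delta> where "\<delta> = (min r\<^sub>1 1)^3 / ((3 + c) * (1 + r\<^sub>2)^2)"
  show "\<delta> > 0" using assms c by (simp add: \<delta>_def)
  fix x y assume x: "r\<^sub>1 \<le> x" and xy: "x < y" "y \<le> r\<^sub>2" "y - x \<le> \<delta>"
  have x0: "x > 0" using x assms by simp
  have "(y - x) * ((3 + c) * (1 + y)^2) \<le> \<delta> * ((3 + c) * (1 + r\<^sub>2)^2)"
    using xy x0 c by (intro mult_mono power_mono) auto
  also have "\<dots> \<le> (min x 1)^3" using x c assms by (simp add: \<delta>_def power_mono)
  finally have small: "(y - x) * (3 + c) * (1 + y)^2 \<le> (min x 1)^3" by (simp add: mult.assoc)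
  have "\<nu> x - \<nu> y \<le> - \<nu>' x * (y - x) * ((x + y) / (2 * x))"
    using diff_le[of x y] x0 xy by (simp add: field_simps power2_eq_square)
  also have "\<dots> \<le> - \<nu>' x * (y - x) * (y / x)"
    using deriv_nonpos[OF x0] x0 xy by (intro mult_left_mono) (auto simp: divide_simps mult_nonpos_nonneg)
  also have "\<dots> \<le> (c * \<nu> x / min x 1) * (y - x) * (y / x)"
    using neg_deriv_le[OF x0] x0 xy by (intro mult_right_mono) (auto simp: c_def)
  finally have "\<nu> x - \<nu> y \<le> c * \<nu> x * (y - x) * y / (x * min x 1)" by simp
  then show "\<nu> x * (x powr c * exp (c * x)) \<le> \<nu> y * (y powr c * exp (c * y))"
    using weighted_short_step[OF c x0 xy(1) small pos[OF x0]] by simp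
qed (use assms in auto)

lemma ratio_le:
  assumes "0 < r\<^sub>1" "r\<^sub>1 \<le> r\<^sub>2"
  shows "\<nu> r\<^sub>1 / \<nu> r\<^sub>2 \<le> (r\<^sub>2 / r\<^sub>1) powr (3 * (a\<^sub>1 - 1)) * exp (3 * (a\<^sub>1 - 1) * (r\<^sub>2 - r\<^sub>1))"
proof -
  define c where "c = 3 * (a\<^sub>1 - 1)"
  have "r\<^sub>2 powr c * exp (c * r\<^sub>2) = (r\<^sub>2 / r\<^sub>1) powr c * exp (c * (r\<^sub>2 - r\<^sub>1)) * (r\<^sub>1 powr c * exp (c * r\<^sub>1))"
    using assms by (simp add: powr_divide exp_diff field_simps)
  then have "\<nu> r\<^sub>1 * (r\<^sub>1 powr c * exp (c * r\<^sub>1))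
      \<le> \<nu> r\<^sub>2 * ((r\<^sub>2 / r\<^sub>1) powr c * exp (c * (r\<^sub>2 - r\<^sub>1))) * (r\<^sub>1 powr c * exp (c * r\<^sub>1))"
    using weighted_profile_mono[OF assms] by (simp add: c_def ac_simps)
  then have "\<nu> r\<^sub>1 \<le> \<nu> r\<^sub>2 * ((r\<^sub>2 / r\<^sub>1) powr c * exp (c * (r\<^sub>2 - r\<^sub>1)))"
    using assms by (simp add: mult_le_cancel_right)
  then show ?thesis using pos[of r\<^sub>2] assms by (simp add: c_def divide_le_eq ac_simps)
qed

end

theorem lemma5p1:
  fixes \<nu> \<nu>' :: "real \<Rightarrow> real" and a\<^sub>1 :: real
    and dummy :: "'a::euclidean_space"
  assumes nonneg: "\<And>r. r > 0 \<Longrightarrow> \<nu> r \<ge> 0"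
    and levy: "(\<integral>\<^sup>+ x. ennreal (min 1 (norm (x::'a) ^ 2) * \<nu> (norm x)) \<partial>lborel) < \<infinity>"
    and infinite: "(\<integral>\<^sup>+ x. ennreal (\<nu> (norm (x::'a))) \<partial>lborel) = \<infinity>"
    and noninc: "\<And>s t. 0 < s \<Longrightarrow> s \<le> t \<Longrightarrow> \<nu> t \<le> \<nu> s"
    and deriv_int: "\<And>r. r > 0 \<Longrightarrow> set_integrable lborel {r<..} \<nu>'"
    and deriv_rep: "\<And>r. r > 0 \<Longrightarrow> \<nu> r = - (LINT \<rho>:{r<..}|lborel. \<nu>' \<rho>)"
    and deriv_mono: "\<And>s t. 0 < s \<Longrightarrow> s \<le> t \<Longrightarrow> - \<nu>' t / t \<le> - \<nu>' s / s"
    and a1_far: "\<And>r. r \<ge> 1 \<Longrightarrow> \<nu> r \<le> a\<^sub>1 * \<nu> (r + 1)"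
    and a1_near: "\<And>r. 0 < r \<Longrightarrow> r \<le> 1 \<Longrightarrow> \<nu> r \<le> a\<^sub>1 * \<nu> (2 * r)"
  shows "(\<forall>r>0. \<bar>\<nu>' r / \<nu> r\<bar> \<le> 3 * (a\<^sub>1 - 1) / min r 1)
    \<and> (\<forall>r\<^sub>1 r\<^sub>2. 0 < r\<^sub>1 \<and> r\<^sub>1 < r\<^sub>2 \<longrightarrow>
          \<nu> r\<^sub>1 / \<nu> r\<^sub>2 \<le> (r\<^sub>2 / r\<^sub>1) powr (3 * (a\<^sub>1 - 1)) * exp (3 * (a\<^sub>1 - 1) * (r\<^sub>2 - r\<^sub>1))
        \<and> \<nu> r\<^sub>1 - \<nu> r\<^sub>2 \<le> 3 / 2 * (a\<^sub>1 - 1) * (\<nu> r\<^sub>1 / min 1 r\<^sub>1) * (r\<^sub>2 - r\<^sub>1) * (1 + r\<^sub>2 / r\<^sub>1))"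
proof -
  have pos: "\<nu> r > 0" if r: "r > 0" for r
  proof (rule ccontr)
    assume "\<not> \<nu> r > 0"
    then have "\<nu> r = 0" using nonneg[OF r] by simp
    then have vanish: "\<nu> t = 0" if "t > 0" for t
      using doubling_profile_vanishes[OF nonneg noninc a1_far a1_near r] that by blast
    have "AE x in lborel. ennreal (\<nu> (norm (x::'a))) = 0"
      using AE_lborel_singleton[of "0::'a"] by eventually_elim (simp add: vanish)
    then have "(\<integral>\<^sup>+ x. ennreal (\<nu> (norm (x::'a))) \<partial>lborel) = 0"
      using nn_integral_cong_AE by fastforce
    then show False using infinite by simp
  qed
  interpret radial_levy_profile \<nu> \<nu>' a\<^sub>1
    using pos noninc deriv_int deriv_rep deriv_mono a1_far a1_near by unfold_locales
  show ?thesis using abs_log_deriv_le ratio_le diff_le_bound by auto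
qed

end
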